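(* Let $X$ be a Banach space. (1) If $J\subset Y\subset X$ are closed subspaces and $(X,J)$ has the CQLP, then $(Y,J)$ has the CQLP. (2) If $J\subset X$ is a closed subspace such that $X/J$ is reflexive and $(X,J)$ has the CQLP, then $(X^{**},J^{\perp\perp})$ has the CQLP. (3) If $J\subset X$ is a closed reflexive subspace and $(X^{**},J)$ has the CQLP (with $X$ and $J$ viewed inside $X^{**}$ via the canonical embedding), then $(X,J)$ has the CQLP.
   Context: For a closed subspace $J$ of a Banach space $X$ with quotient map $\pi:X\to X/J$, the pair $(X,J)$ has the compact quotient lifting property (CQLP) if for every Banach space $Z$ and every compact linear operator $T:Z\to X/J$ there is a compact linear operator $S:Z\to X$ with $\pi\circ S=T$ and $\|S\|=\|T\|$. $J^{\perp\perp}\subset X^{**}$ is the bi-annihilator of $J$; $(X/J)^{**}$ is identified with $X^{**}/J^{\perp\perp}$. *)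

theory Defs
  imports "HOL-Analysis.Analysis"
begin

definition compact_op :: "('z::real_normed_vector \<Rightarrow> 'y::real_normed_vector) \<Rightarrow> bool" where
  "compact_op T \<longleftrightarrow> bounded_linear T \<and> compact (closure (T ` cball 0 1))"

definition canon :: "'a::real_normed_vector \<Rightarrow> (('a \<Rightarrow>\<^sub>L real) \<Rightarrow>\<^sub>L real)" where
  "canon x = Blinfun (\<lambda>f. blinfun_apply f x)"

definition annihilator :: "'a::real_normed_vector set \<Rightarrow> ('a \<Rightarrow>\<^sub>L real) set" where
  "annihilator J = {f. \<forall>x\<in>J. blinfun_apply f x = 0}"

definition biannihilator :: "'a::real_normed_vector set \<Rightarrow> (('a \<Rightarrow>\<^sub>L real) \<Rightarrow>\<^sub>L real) set" where
  "biannihilator J = {\<phi>. \<forall>f\<in>annihilator J. blinfun_apply \<phi> f = 0}"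

definition reflexive_space :: "'a::real_normed_vector itself \<Rightarrow> bool" where
  "reflexive_space (_ :: 'a itself) \<longleftrightarrow> surj (canon :: 'a \<Rightarrow> _)"

text \<open>banach_quotient pi X J: the type 'q together with \<pi> is (a model of) the
  quotient space X/J, where X is a subspace of the ambient space containing J:
  \<pi> is linear on X, maps X onto 'q, and carries the quotient norm.\<close>
definition banach_quotient :: "('a::real_normed_vector \<Rightarrow> 'q::real_normed_vector) \<Rightarrow> 'a set \<Rightarrow> 'a set \<Rightarrow> bool" where
  "banach_quotient \<pi> X J \<longleftrightarrow>
     (\<forall>x\<in>X. \<forall>y\<in>X. \<pi> (x + y) = \<pi> x + \<pi> y) \<and>
     (\<forall>c. \<forall>x\<in>X. \<pi> (c *\<^sub>R x) = c *\<^sub>R \<pi> x) \<and>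
     \<pi> ` X = UNIV \<and>
     (\<forall>x\<in>X. norm (\<pi> x) = infdist x J)"

text \<open>CQLP of (X,J) (quotient modelled by \<pi>) tested against Banach spaces of type 'z.\<close>
definition cqlp :: "'z::banach itself \<Rightarrow> ('a::real_normed_vector \<Rightarrow> 'q::real_normed_vector) \<Rightarrow> 'a set \<Rightarrow> 'a set \<Rightarrow> bool" where
  "cqlp (_ :: 'z itself) \<pi> X J \<longleftrightarrow>
     (\<forall>T :: 'z \<Rightarrow> 'q. compact_op T \<longrightarrow>
        (\<exists>S :: 'z \<Rightarrow> 'a. compact_op S \<and> range S \<subseteq> X \<and> (\<forall>z. \<pi> (S z) = T z) \<and> onorm S = onorm T))"

end

theory Submission
  imports Defs
begin

text \<open>All three statements rest on one mechanism. If a linear isometry E between the ambient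
  spaces preserves the distance to the subspaces, the quotient maps induce a linear isometry
  \<iota> between the quotients with \<iota> \<circ> \<pi> = \<rho> \<circ> E. A compact T into the smaller quotient is then
  lifted by lifting \<iota> \<circ> T in the larger pair: the values of that lift differ from E-images by
  elements of the subspace, and when the subspace lies in the range of E the lift factors
  through E, keeping compactness and norm. Conversely, if \<iota> is onto, E composed with a lift of
  inv \<iota> \<circ> T lifts T in the larger pair. For (1), E is the inclusion of Y. For (2) and (3), E is
  the canonical embedding into the bidual; it preserves the distance to the bi-annihilator by
  the Hahn-Banach theorem, and when X/J is reflexive every element of the bidual is an element
  of X modulo the bi-annihilator, so \<iota> is onto.\<close>

section \<open>The Hahn-Banach theorem\<close>

text \<open>Partial linear functionals through (x0, a) dominated by p, encoded by their graphs so that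
  Zorn's lemma applies to set inclusion.\<close>

definition dominated_graph ::
    "('a::real_vector \<Rightarrow> real) \<Rightarrow> 'a \<Rightarrow> real \<Rightarrow> ('a \<times> real) set \<Rightarrow> bool" where
  "dominated_graph p x0 a G \<longleftrightarrow> (x0, a) \<in> G \<and>
     (\<forall>x u v. (x, u) \<in> G \<longrightarrow> (x, v) \<in> G \<longrightarrow> u = v) \<and>
     (\<forall>x u y v. (x, u) \<in> G \<longrightarrow> (y, v) \<in> G \<longrightarrow> (x + y, u + v) \<in> G) \<and>
     (\<forall>c x u. (x, u) \<in> G \<longrightarrow> (c *\<^sub>R x, c * u) \<in> G) \<and>
     (\<forall>x u. (x, u) \<in> G \<longrightarrow> u \<le> p x)"

lemma dominated_graph_extension_value:
  fixes p :: "'a::real_vector \<Rightarrow> real"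
  assumes sub: "\<And>x y. p (x + y) \<le> p x + p y"
    and G: "dominated_graph p x0 a G"
  obtains c where "\<And>x u. (x, u) \<in> G \<Longrightarrow> u - p (x - y) \<le> c"
    and "\<And>x u. (x, u) \<in> G \<Longrightarrow> c \<le> p (x + y) - u"
proof
  have add: "\<And>x u y v. (x, u) \<in> G \<Longrightarrow> (y, v) \<in> G \<Longrightarrow> (x + y, u + v) \<in> G"
   and dom: "\<And>x u. (x, u) \<in> G \<Longrightarrow> u \<le> p x"
   and zero: "(0, 0) \<in> G"
    using G unfolding dominated_graph_def by (blast, blast, metis mult_zero_left scaleR_zero_left)
  have gap: "u - p (x - y) \<le> p (x' + y) - u'" if "(x, u) \<in> G" "(x', u') \<in> G" for x u x' u'
  proof -
    have "u + u' \<le> p ((x - y) + (x' + y))" using dom[OF add[OF that]] by simp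
    then show ?thesis using sub[of "x - y" "x' + y"] by linarith
  qed
  define L where "L = {u - p (x - y) | x u. (x, u) \<in> G}"
  have "bdd_above L" unfolding L_def using gap[OF _ zero] by (intro bdd_aboveI) blast
  then show "u - p (x - y) \<le> Sup L" if "(x, u) \<in> G" for x u
    using that unfolding L_def by (auto intro: cSup_upper)
  show "Sup L \<le> p (x' + y) - u'" if "(x', u') \<in> G" for x' u'
    using zero gap that unfolding L_def by (auto intro!: cSup_least)
qed

lemma dominated_graph_extension_bound:
  fixes p :: "'a::real_vector \<Rightarrow> real"
  assumes hom: "\<And>c x. c \<ge> 0 \<Longrightarrow> p (c *\<^sub>R x) = c * p x"
    and G: "dominated_graph p x0 a G"
    and c1: "\<And>x u. (x, u) \<in> G \<Longrightarrow> u - p (x - y) \<le> c"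
    and c2: "\<And>x u. (x, u) \<in> G \<Longrightarrow> c \<le> p (x + y) - u"
    and xu: "(x, u) \<in> G"
  shows "u + t * c \<le> p (x + t *\<^sub>R y)"
proof -
  have scale: "\<And>c x u. (x, u) \<in> G \<Longrightarrow> (c *\<^sub>R x, c * u) \<in> G"
    using G unfolding dominated_graph_def by blast
  \<comment> \<open>The bounds on c, applied to (x, u) scaled by 1/|t|, are multiplied by |t|.\<close>
  show ?thesis
  proof (cases t "0::real" rule: linorder_cases)
    case less
    have "(1/(-t)) * u - p ((1/(-t)) *\<^sub>R x - y) \<le> c" using c1[OF scale[OF xu]] .
    then have "u - (-t) * p ((1/(-t)) *\<^sub>R x - y) \<le> (-t) * c"
      using less by (simp add: field_simps)
    moreover have "(-t) * p ((1/(-t)) *\<^sub>R x - y) = p (x + t *\<^sub>R y)"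
      using hom[of "-t" "(1/(-t)) *\<^sub>R x - y"] less by (simp add: scaleR_diff_right)
    ultimately show ?thesis by simp
  next
    case equal
    then show ?thesis using G xu unfolding dominated_graph_def by simp
  next
    case greater
    have "c \<le> p ((1/t) *\<^sub>R x + y) - (1/t) * u" using c2[OF scale[OF xu]] .
    then have "t * c \<le> t * p ((1/t) *\<^sub>R x + y) - u"
      using greater by (simp add: field_simps)
    moreover have "t * p ((1/t) *\<^sub>R x + y) = p (x + t *\<^sub>R y)"
      using hom[of t "(1/t) *\<^sub>R x + y"] greater by (simp add: scaleR_add_right)
    ultimately show ?thesis by simp
  qed
qed

lemma dominated_graph_offset_unique:
  assumes G: "dominated_graph p x0 a G" and y: "\<And>u. (y, u) \<notin> G"
    and "(x, u) \<in> G" "(x', u') \<in> G" "x + t *\<^sub>R y = x' + t' *\<^sub>R y"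
  shows "t = t'"
proof (rule ccontr)
  assume "t \<noteq> t'"
  have add: "\<And>x u y v. (x, u) \<in> G \<Longrightarrow> (y, v) \<in> G \<Longrightarrow> (x + y, u + v) \<in> G"
   and scale: "\<And>c x u. (x, u) \<in> G \<Longrightarrow> (c *\<^sub>R x, c * u) \<in> G"
    using G unfolding dominated_graph_def by blast+
  have "(x' - x, u' - u) \<in> G" using add[OF assms(4) scale[OF assms(3), of "-1"]] by simp
  moreover have "x' - x = (t - t') *\<^sub>R y" using assms(5) by (simp add: algebra_simps)
  then have "(1/(t - t')) *\<^sub>R (x' - x) = y" using \<open>t \<noteq> t'\<close> by simp
  ultimately show False using scale y by metis
qed

lemma dominated_graph_extend:
  fixes p :: "'a::real_vector \<Rightarrow> real"
  assumes sub: "\<And>x y. p (x + y) \<le> p x + p y"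
    and hom: "\<And>c x. c \<ge> 0 \<Longrightarrow> p (c *\<^sub>R x) = c * p x"
    and G: "dominated_graph p x0 a G"
    and y: "\<And>u. (y, u) \<notin> G"
  shows "\<exists>G'. dominated_graph p x0 a G' \<and> G \<subset> G'"
proof -
  have functional: "\<And>x u v. (x, u) \<in> G \<Longrightarrow> (x, v) \<in> G \<Longrightarrow> u = v"
   and add: "\<And>x u y v. (x, u) \<in> G \<Longrightarrow> (y, v) \<in> G \<Longrightarrow> (x + y, u + v) \<in> G"
   and scale: "\<And>c x u. (x, u) \<in> G \<Longrightarrow> (c *\<^sub>R x, c * u) \<in> G"
   and x0: "(x0, a) \<in> G"
    using G unfolding dominated_graph_def by blast+
  obtain c where c1: "\<And>x u. (x, u) \<in> G \<Longrightarrow> u - p (x - y) \<le> c"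
    and c2: "\<And>x u. (x, u) \<in> G \<Longrightarrow> c \<le> p (x + y) - u"
    using dominated_graph_extension_value[OF sub G] by blast
  define G' where "G' = {(x + t *\<^sub>R y, u + t * c) | x u t. (x, u) \<in> G}"
  have "dominated_graph p x0 a G'"
    unfolding dominated_graph_def
  proof (intro conjI allI impI)
    show "(x0, a) \<in> G'" unfolding G'_def using x0 by force
  next
    fix x u v assume "(x, u) \<in> G'" "(x, v) \<in> G'"
    then obtain x1 u1 t1 x2 u2 t2 where G12: "(x1, u1) \<in> G" "(x2, u2) \<in> G"
      and "x = x1 + t1 *\<^sub>R y" "u = u1 + t1 * c" "x = x2 + t2 *\<^sub>R y" "v = u2 + t2 * c"
      unfolding G'_def by blast
    moreover from this have "t1 = t2" using dominated_graph_offset_unique[OF G y G12] by simp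
    ultimately show "u = v" using functional by auto
  next
    fix x u z v assume "(x, u) \<in> G'" "(z, v) \<in> G'"
    then obtain x1 u1 t1 x2 u2 t2 where G12: "(x1, u1) \<in> G" "(x2, u2) \<in> G"
      and "x = x1 + t1 *\<^sub>R y" "u = u1 + t1 * c" "z = x2 + t2 *\<^sub>R y" "v = u2 + t2 * c"
      unfolding G'_def by blast
    then have "(x + z, u + v) = ((x1 + x2) + (t1 + t2) *\<^sub>R y, (u1 + u2) + (t1 + t2) * c)"
      by (simp add: algebra_simps)
    then show "(x + z, u + v) \<in> G'" unfolding G'_def using add[OF G12] by blast
  next
    fix d x u assume "(x, u) \<in> G'"
    then obtain x1 u1 t1 where G1: "(x1, u1) \<in> G" and "x = x1 + t1 *\<^sub>R y" "u = u1 + t1 * c"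
      unfolding G'_def by blast
    then have "(d *\<^sub>R x, d * u) = (d *\<^sub>R x1 + (d * t1) *\<^sub>R y, d * u1 + (d * t1) * c)"
      by (simp add: algebra_simps)
    then show "(d *\<^sub>R x, d * u) \<in> G'" unfolding G'_def using scale[OF G1] by blast
  next
    fix x u assume "(x, u) \<in> G'"
    then show "u \<le> p x"
      unfolding G'_def using dominated_graph_extension_bound[OF hom G c1 c2] by blast
  qed
  moreover have "G \<subseteq> G'" unfolding G'_def by force
  moreover have "(y, c) \<in> G'" unfolding G'_def using scale[OF x0, of 0] by force
  ultimately show ?thesis using y by blast
qed

lemma dominated_graph_Union_chain:
  assumes "subset.chain {G. dominated_graph p x0 a G} C" and "C \<noteq> {}"
  shows "dominated_graph p x0 a (\<Union>C)"
proof -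
  have dg: "\<And>G. G \<in> C \<Longrightarrow> dominated_graph p x0 a G"
    using assms(1) unfolding subset_chain_def by auto
  have common: "\<exists>G\<in>C. P \<in> G \<and> Q \<in> G" if "P \<in> \<Union>C" "Q \<in> \<Union>C" for P Q
    using that assms(1) unfolding subset_chain_def by blast
  show ?thesis
    unfolding dominated_graph_def
  proof (intro conjI allI impI)
    show "(x0, a) \<in> \<Union>C" using dg assms(2) unfolding dominated_graph_def by blast
  next
    fix x u v assume "(x, u) \<in> \<Union>C" "(x, v) \<in> \<Union>C"
    then show "u = v" using common dg unfolding dominated_graph_def by metis
  next
    fix x u y v assume "(x, u) \<in> \<Union>C" "(y, v) \<in> \<Union>C"
    then show "(x + y, u + v) \<in> \<Union>C" using common dg unfolding dominated_graph_def by (metis UnionI)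
  next
    fix c x u assume "(x, u) \<in> \<Union>C"
    then show "(c *\<^sub>R x, c * u) \<in> \<Union>C" using dg unfolding dominated_graph_def by blast
  next
    fix x u assume "(x, u) \<in> \<Union>C"
    then show "u \<le> p x" using dg unfolding dominated_graph_def by blast
  qed
qed

theorem Hahn_Banach_sublinear:
  fixes p :: "'a::real_vector \<Rightarrow> real"
  assumes sub: "\<And>x y. p (x + y) \<le> p x + p y"
    and hom: "\<And>c x. c \<ge> 0 \<Longrightarrow> p (c *\<^sub>R x) = c * p x"
    and "a \<le> p x0" and "- a \<le> p (- x0)"
  shows "\<exists>F. linear F \<and> F x0 = a \<and> (\<forall>x. F x \<le> p x)"
proof -
  define B where "B = {(t *\<^sub>R x0, t * a) | t. True}"
  have "dominated_graph p x0 a B"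
    unfolding dominated_graph_def
  proof (intro conjI allI impI)
    show "(x0, a) \<in> B" unfolding B_def by (auto intro: exI[of _ 1])
  next
    fix x u v assume "(x, u) \<in> B" "(x, v) \<in> B"
    then obtain t s where "x = t *\<^sub>R x0" "u = t * a" "x = s *\<^sub>R x0" "v = s * a"
      unfolding B_def by blast
    moreover have "a = 0" if "x0 = 0" using assms(3,4) hom[of 0 0] that by simp
    ultimately show "u = v" by (cases "x0 = 0") auto
  next
    fix x u y v assume "(x, u) \<in> B" "(y, v) \<in> B"
    then show "(x + y, u + v) \<in> B"
      unfolding B_def by (auto simp: algebra_simps intro: exI[of _ "_ + _"])
  next
    fix c x u assume "(x, u) \<in> B"
    then show "(c *\<^sub>R x, c * u) \<in> B" unfolding B_def by (auto intro: exI[of _ "c * _"])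
  next
    fix x u assume "(x, u) \<in> B"
    then obtain t where x: "x = t *\<^sub>R x0" "u = t * a" unfolding B_def by blast
    show "u \<le> p x"
    proof (cases "t \<ge> 0")
      case True
      then show ?thesis using x hom[OF True, of x0] assms(3) by (simp add: mult_left_mono)
    next
      case False
      then have "(-t) * (-a) \<le> (-t) * p (- x0)" using assms(4) by (intro mult_left_mono) auto
      then show ?thesis using x hom[of "-t" "-x0"] False by simp
    qed
  qed
  then obtain M where M: "dominated_graph p x0 a M"
    and max: "\<And>G. dominated_graph p x0 a G \<Longrightarrow> M \<subseteq> G \<Longrightarrow> G = M"
    using subset_Zorn_nonempty[of "{G. dominated_graph p x0 a G}"] dominated_graph_Union_chain
    by (metis (mono_tags, lifting) empty_Collect_eq mem_Collect_eq)
  have total: "\<exists>u. (x, u) \<in> M" for x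
    using dominated_graph_extend[OF sub hom M, of x] max by blast
  have functional: "\<And>x u v. (x, u) \<in> M \<Longrightarrow> (x, v) \<in> M \<Longrightarrow> u = v"
   and add: "\<And>x u y v. (x, u) \<in> M \<Longrightarrow> (y, v) \<in> M \<Longrightarrow> (x + y, u + v) \<in> M"
   and scale: "\<And>c x u. (x, u) \<in> M \<Longrightarrow> (c *\<^sub>R x, c * u) \<in> M"
   and dom: "\<And>x u. (x, u) \<in> M \<Longrightarrow> u \<le> p x"
   and x0: "(x0, a) \<in> M"
    using M unfolding dominated_graph_def by blast+
  define F where "F x = (THE u. (x, u) \<in> M)" for x
  have FM: "(x, F x) \<in> M" for x
    unfolding F_def by (rule theI') (use total[of x] functional in blast)
  have F_eq: "(x, u) \<in> M \<Longrightarrow> F x = u" for x u by (rule functional[OF FM])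
  have "linear F"
    by (rule linearI) (use F_eq[OF add[OF FM FM]] F_eq[OF scale[OF FM]] in auto)
  then show ?thesis using F_eq[OF x0] dom[OF FM] by blast
qed

section \<open>Distance to a subspace\<close>

lemma infdist_add_subspace:
  fixes J :: "'a::real_normed_vector set"
  assumes "subspace J"
  shows "infdist (y + z) J \<le> infdist y J + infdist z J"
proof -
  have ne: "J \<noteq> {}" using subspace_0[OF assms] by blast
  have "infdist (y + z) J - infdist z J \<le> dist y j" if "j \<in> J" for j
  proof -
    have "infdist (y + z) J - dist y j \<le> dist z k" if "k \<in> J" for k
    proof -
      have "infdist (y + z) J \<le> dist (y + z) (j + k)"
        using subspace_add[OF assms \<open>j \<in> J\<close> \<open>k \<in> J\<close>] by (rule infdist_le)
      also have "\<dots> \<le> dist y j + dist z k"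
        unfolding dist_norm by (metis add_diff_add norm_triangle_ineq)
      finally show ?thesis by simp
    qed
    then have "infdist (y + z) J - dist y j \<le> infdist z J"
      using ne by (simp add: infdist_notempty cINF_greatest)
    then show ?thesis by simp
  qed
  then have "infdist (y + z) J - infdist z J \<le> infdist y J"
    using ne by (simp add: infdist_notempty cINF_greatest)
  then show ?thesis by simp
qed

lemma infdist_scaleR_subspace:
  fixes J :: "'a::real_normed_vector set"
  assumes "subspace J"
  shows "infdist (c *\<^sub>R y) J = \<bar>c\<bar> * infdist y J"
proof -
  have ne: "J \<noteq> {}" using subspace_0[OF assms] by blast
  have le: "infdist (c *\<^sub>R y) J \<le> \<bar>c\<bar> * infdist y J" if "c \<noteq> 0" for c y
  proof -
    have "infdist (c *\<^sub>R y) J / \<bar>c\<bar> \<le> dist y j" if "j \<in> J" for j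
    proof -
      have "infdist (c *\<^sub>R y) J \<le> dist (c *\<^sub>R y) (c *\<^sub>R j)"
        using subspace_scale[OF assms \<open>j \<in> J\<close>] by (rule infdist_le)
      also have "\<dots> = \<bar>c\<bar> * dist y j"
        by (simp add: dist_norm scaleR_diff_right[symmetric])
      finally show ?thesis using \<open>c \<noteq> 0\<close> by (simp add: divide_le_eq mult.commute)
    qed
    then have "infdist (c *\<^sub>R y) J / \<bar>c\<bar> \<le> infdist y J"
      using ne by (simp add: infdist_notempty cINF_greatest)
    then show ?thesis using \<open>c \<noteq> 0\<close> by (simp add: divide_le_eq mult.commute)
  qed
  show ?thesis
  proof (cases "c = 0")
    case True
    then show ?thesis using subspace_0[OF assms] by simp
  next
    case False
    have "infdist y J = infdist (inverse c *\<^sub>R (c *\<^sub>R y)) J" using False by simp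
    also have "\<dots> \<le> \<bar>inverse c\<bar> * infdist (c *\<^sub>R y) J"
      using le[of "inverse c" "c *\<^sub>R y"] False by simp
    finally have "\<bar>c\<bar> * infdist y J \<le> infdist (c *\<^sub>R y) J"
      using False by (simp add: field_simps)
    then show ?thesis using le[OF False, of y] by linarith
  qed
qed

lemma infdist_le_norm_subspace:
  fixes J :: "'a::real_normed_vector set"
  assumes "subspace J"
  shows "infdist y J \<le> norm y"
  using infdist_le[OF subspace_0[OF assms], of y] by simp

lemma exists_annihilator_infdist:
  fixes J :: "'a::real_normed_vector set"
  assumes J: "subspace J"
  shows "\<exists>f \<in> annihilator J. norm f \<le> 1 \<and> blinfun_apply f x = infdist x J"
proof -
  define p where "p y = infdist y J" for y
  have sub: "p (y + z) \<le> p y + p z" for y z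
    unfolding p_def by (rule infdist_add_subspace[OF J])
  have hom: "p (c *\<^sub>R y) = c * p y" if "c \<ge> 0" for c y
    unfolding p_def using infdist_scaleR_subspace[OF J] that by simp
  have sym: "p (- y) = p y" for y
    using infdist_scaleR_subspace[OF J, of "-1" y] unfolding p_def by simp
  have "- p x \<le> p (- x)" using sym[of x] infdist_nonneg[of x J] unfolding p_def by simp
  then obtain F where F: "linear F" "F x = p x" "\<And>y. F y \<le> p y"
    using Hahn_Banach_sublinear[OF sub hom order_refl] by blast
  have abs_F: "\<bar>F y\<bar> \<le> p y" for y
    using F(3)[of y] F(3)[of "- y"] linear_neg[OF F(1), of y] sym[of y] by simp
  have norm_F: "\<bar>F y\<bar> \<le> norm y" for y
    using abs_F[of y] infdist_le_norm_subspace[OF J, of y] unfolding p_def by simp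
  have "bounded_linear F"
    using linear_add[OF F(1)] linear_scale[OF F(1)] norm_F
    by (intro bounded_linear_intro[where K=1]) simp_all
  then have apply_F: "blinfun_apply (Blinfun F) = F" by (rule bounded_linear_Blinfun_apply)
  have "F j = 0" if "j \<in> J" for j
    using abs_F[of j] that unfolding p_def by simp
  then have "Blinfun F \<in> annihilator J" by (simp add: annihilator_def apply_F)
  moreover have "norm (Blinfun F) \<le> 1"
    using norm_F by (intro norm_blinfun_bound) (simp_all add: apply_F)
  ultimately show ?thesis using F(2) unfolding p_def by (auto simp: apply_F)
qed

section \<open>Quotient maps\<close>

lemma banach_quotient_diff:
  assumes "banach_quotient \<pi> X J" "subspace X" "x \<in> X" "y \<in> X"
  shows "\<pi> (x - y) = \<pi> x - \<pi> y"
proof -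
  have "\<pi> (x + (-1) *\<^sub>R y) = \<pi> x + \<pi> ((-1) *\<^sub>R y)"
    using assms(1,3) subspace_scale[OF assms(2,4)] unfolding banach_quotient_def by blast
  also have "\<pi> ((-1) *\<^sub>R y) = (-1) *\<^sub>R \<pi> y"
    using assms(1,4) unfolding banach_quotient_def by blast
  finally show ?thesis by simp
qed

lemma norm_banach_quotient_diff:
  assumes "banach_quotient \<pi> X J" "subspace X" "x \<in> X" "y \<in> X"
  shows "norm (\<pi> x - \<pi> y) = infdist (x - y) J"
  using assms subspace_diff[OF assms(2-4)]
  by (simp add: banach_quotient_def flip: banach_quotient_diff)

lemma banach_quotient_eq_iff:
  assumes "banach_quotient \<pi> X J" "subspace X" "subspace J" "closed J" "x \<in> X" "y \<in> X"
  shows "\<pi> x = \<pi> y \<longleftrightarrow> x - y \<in> J"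
  using norm_banach_quotient_diff[OF assms(1,2,5,6)] in_closed_iff_infdist_zero[OF assms(4)]
    subspace_0[OF assms(3)] by force

lemma bounded_linear_banach_quotient:
  assumes "banach_quotient \<pi> UNIV J" "subspace J"
  shows "bounded_linear \<pi>"
  using assms infdist_le_norm_subspace[OF assms(2)] unfolding banach_quotient_def
  by (intro bounded_linear_intro[where K=1]) auto

lemma banach_quotient_factor:
  fixes \<pi> :: "'a::real_normed_vector \<Rightarrow> 'p::real_normed_vector"
    and f :: "'a \<Rightarrow> 'b::real_normed_vector"
  assumes \<pi>: "banach_quotient \<pi> X J" "subspace X"
    and f: "\<And>x y. x \<in> X \<Longrightarrow> y \<in> X \<Longrightarrow> f (x + y) = f x + f y"
      "\<And>c x. x \<in> X \<Longrightarrow> f (c *\<^sub>R x) = c *\<^sub>R f x"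
      "\<And>x. x \<in> X \<Longrightarrow> norm (f x) \<le> C * infdist x J"
  obtains g where "bounded_linear g" "\<And>x. x \<in> X \<Longrightarrow> g (\<pi> x) = f x"
proof -
  have rep: "\<exists>x\<in>X. \<pi> x = p" for p using \<pi>(1) unfolding banach_quotient_def by (metis UNIV_I imageE)
  have well_defined: "f x = f y" if "x \<in> X" "y \<in> X" "\<pi> x = \<pi> y" for x y
  proof -
    have "f (x + (-1) *\<^sub>R y) = f x + f ((-1) *\<^sub>R y)"
      using f(1) that(1,2) subspace_scale[OF \<pi>(2)] by blast
    also have "f ((-1) *\<^sub>R y) = (-1) *\<^sub>R f y" using f(2) that(2) by blast
    finally have "f (x - y) = f x - f y" by simp
    then have "norm (f x - f y) \<le> C * infdist (x - y) J"
      using f(3) subspace_diff[OF \<pi>(2) that(1,2)] by metis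
    also have "\<dots> = 0" using norm_banach_quotient_diff[OF \<pi> that(1,2)] that(3) by simp
    finally show ?thesis by simp
  qed
  define g where "g p = f (SOME x. x \<in> X \<and> \<pi> x = p)" for p
  have g_\<pi>: "g (\<pi> x) = f x" if "x \<in> X" for x
    unfolding g_def using someI_ex[of "\<lambda>y. y \<in> X \<and> \<pi> y = \<pi> x"] that well_defined by blast
  have "bounded_linear g"
  proof (rule bounded_linear_intro[where K=C])
    fix p q :: 'p and c :: real
    obtain x y where xy: "x \<in> X" "y \<in> X" "\<pi> x = p" "\<pi> y = q" using rep by metis
    show "g (p + q) = g p + g q"
      using xy g_\<pi> f(1) subspace_add[OF \<pi>(2)] \<pi>(1) unfolding banach_quotient_def by metis
    show "g (c *\<^sub>R p) = c *\<^sub>R g p"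
      using xy g_\<pi> f(2) subspace_scale[OF \<pi>(2)] \<pi>(1) unfolding banach_quotient_def by metis
    show "norm (g p) \<le> norm p * C"
      using xy g_\<pi> f(3) \<pi>(1) unfolding banach_quotient_def by (metis mult.commute)
  qed
  then show ?thesis using that g_\<pi> by blast
qed

lemma quotient_isometry:
  fixes E :: "'a::real_normed_vector \<Rightarrow> 'b::real_normed_vector"
    and \<pi> :: "'a \<Rightarrow> 'p::real_normed_vector" and \<rho> :: "'b \<Rightarrow> 'r::real_normed_vector"
  assumes \<pi>: "banach_quotient \<pi> X J" "subspace X" and \<rho>: "banach_quotient \<rho> X' K"
    and E: "linear E" "E ` X \<subseteq> X'"
    and dist: "\<And>x. x \<in> X \<Longrightarrow> infdist (E x) K = infdist x J"
  obtains \<iota> where "bounded_linear \<iota>" "\<And>p. norm (\<iota> p) = norm p"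
    "\<And>x. x \<in> X \<Longrightarrow> \<iota> (\<pi> x) = \<rho> (E x)"
proof -
  have EX: "E x \<in> X'" if "x \<in> X" for x using that E(2) by blast
  have norm_\<rho>E: "norm (\<rho> (E x)) = infdist x J" if "x \<in> X" for x
    using \<rho> EX[OF that] dist[OF that] unfolding banach_quotient_def by simp
  obtain \<iota> where \<iota>: "bounded_linear \<iota>" "\<And>x. x \<in> X \<Longrightarrow> \<iota> (\<pi> x) = \<rho> (E x)"
  proof (rule banach_quotient_factor[OF \<pi>, of "\<rho> \<circ> E" 1])
    show "(\<rho> \<circ> E) (x + y) = (\<rho> \<circ> E) x + (\<rho> \<circ> E) y" if "x \<in> X" "y \<in> X" for x y
      using \<rho> EX that unfolding banach_quotient_def by (simp add: linear_add[OF E(1)])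
    show "(\<rho> \<circ> E) (c *\<^sub>R x) = c *\<^sub>R (\<rho> \<circ> E) x" if "x \<in> X" for c x
      using \<rho> EX that unfolding banach_quotient_def by (simp add: linear_scale[OF E(1)])
  qed (simp_all add: norm_\<rho>E)
  moreover have "norm (\<iota> p) = norm p" for p
  proof -
    obtain x where "x \<in> X" "\<pi> x = p" using \<pi>(1) unfolding banach_quotient_def by (metis UNIV_I imageE)
    then show ?thesis using \<iota>(2) norm_\<rho>E \<pi>(1) unfolding banach_quotient_def by auto
  qed
  ultimately show ?thesis using that by blast
qed

section \<open>The canonical embedding into the bidual\<close>

lemma canon_apply [simp]: "blinfun_apply (canon x) f = blinfun_apply f x"
  unfolding canon_def by (simp add: bounded_linear_Blinfun_apply)

lemma norm_canon [simp]: "norm (canon x) = norm x"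
proof (rule antisym)
  show "norm (canon x) \<le> norm x"
    using norm_blinfun[of _ x]
    by (intro norm_blinfun_bound) (simp_all add: mult.commute flip: real_norm_def)
  obtain f where "norm f \<le> 1" "blinfun_apply f x = norm x"
    using exists_annihilator_infdist[OF subspace_single_0, of x] by auto
  then have "norm x \<le> norm (canon x) * norm f"
    using norm_blinfun[of "canon x" f] by simp
  also have "\<dots> \<le> norm (canon x)"
    using \<open>norm f \<le> 1\<close> by (simp add: mult_left_le)
  finally show "norm x \<le> norm (canon x)" .
qed

lemma bounded_linear_canon: "bounded_linear canon"
proof (rule bounded_linear_intro[where K=1])
  show "canon (x + y) = canon x + canon y" for x y
    by (rule blinfun_eqI) (simp add: blinfun.add_right plus_blinfun.rep_eq)
  show "canon (r *\<^sub>R x) = r *\<^sub>R canon x" for r x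
    by (rule blinfun_eqI) (simp add: blinfun.scaleR_right scaleR_blinfun.rep_eq)
qed simp

lemma dist_canon [simp]: "dist (canon x) (canon y) = dist x y"
  by (simp add: dist_norm flip: linear_diff[OF bounded_linear.linear[OF bounded_linear_canon]])

lemma canon_in_biannihilator: "x \<in> J \<Longrightarrow> canon x \<in> biannihilator J"
  by (simp add: biannihilator_def annihilator_def)

lemma abs_annihilator_le_infdist:
  fixes J :: "'a::real_normed_vector set"
  assumes "f \<in> annihilator J" "J \<noteq> {}"
  shows "\<bar>blinfun_apply f x\<bar> \<le> norm f * infdist x J"
proof (cases "f = 0")
  case False
  then have pos: "norm f > 0" by simp
  have "\<bar>blinfun_apply f x\<bar> / norm f \<le> dist x j" if "j \<in> J" for j
  proof -
    have "blinfun_apply f x = blinfun_apply f (x - j)"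
      using assms(1) that by (simp add: annihilator_def blinfun.diff_right)
    also have "\<bar>\<dots>\<bar> \<le> norm f * dist x j"
      using norm_blinfun[of f "x - j"] by (simp add: dist_norm)
    finally show ?thesis using pos by (simp add: divide_le_eq mult.commute)
  qed
  then have "\<bar>blinfun_apply f x\<bar> / norm f \<le> infdist x J"
    using assms(2) by (simp add: infdist_notempty cINF_greatest)
  then show ?thesis using pos by (simp add: divide_le_eq mult.commute)
qed simp

lemma annihilator_factor_quotient:
  fixes \<pi> :: "'a::real_normed_vector \<Rightarrow> 'q::real_normed_vector"
  assumes \<pi>: "banach_quotient \<pi> UNIV J" and J: "subspace J" and f: "f \<in> annihilator J"
  obtains g :: "'q \<Rightarrow>\<^sub>L real" where "\<And>x. blinfun_apply g (\<pi> x) = blinfun_apply f x"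
proof -
  have "J \<noteq> {}" using subspace_0[OF J] by blast
  then obtain g where "bounded_linear g" "\<And>x. g (\<pi> x) = blinfun_apply f x"
    using banach_quotient_factor[OF \<pi> subspace_UNIV, of "blinfun_apply f" "norm f"]
      abs_annihilator_le_infdist[OF f]
    by (auto simp: blinfun.add_right blinfun.scaleR_right)
  then show ?thesis using that[of "Blinfun g"] by (simp add: bounded_linear_Blinfun_apply)
qed

text \<open>If X/J is reflexive, the bidual of X is the canonical image of X plus the bi-annihilator
  of J: restricted to the annihilator of J, which is the dual of X/J, any \<phi> is evaluation at
  a point of X/J.\<close>

lemma bidual_eq_canon_plus_biannihilator:
  fixes \<pi> :: "'a::real_normed_vector \<Rightarrow> 'q::real_normed_vector"
  assumes \<pi>: "banach_quotient \<pi> UNIV J" and J: "subspace J"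
    and refl: "reflexive_space TYPE('q)"
  shows "\<exists>x. \<phi> - canon x \<in> biannihilator J"
proof -
  have "bounded_linear \<pi>" by (rule bounded_linear_banach_quotient[OF \<pi> J])
  then have \<pi>_apply: "blinfun_apply (Blinfun \<pi>) = \<pi>" by (rule bounded_linear_Blinfun_apply)
  define \<psi> where "\<psi> g = blinfun_apply \<phi> (g o\<^sub>L Blinfun \<pi>)" for g :: "'q \<Rightarrow>\<^sub>L real"
  have "bounded_linear \<psi>" unfolding \<psi>_def
    by (rule bounded_linear_compose[OF blinfun.bounded_linear_right
          bounded_bilinear.bounded_linear_left[OF bounded_bilinear_blinfun_compose]])
  then have \<psi>_apply: "blinfun_apply (Blinfun \<psi>) = \<psi>" by (rule bounded_linear_Blinfun_apply)
  obtain q :: 'q where q: "canon q = Blinfun \<psi>"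
    using refl unfolding reflexive_space_def by (metis surjD)
  obtain x where x: "\<pi> x = q" using \<pi> unfolding banach_quotient_def by (metis UNIV_I imageE)
  have "blinfun_apply \<phi> f = blinfun_apply f x" if f: "f \<in> annihilator J" for f
  proof -
    obtain g where g: "\<And>x. blinfun_apply g (\<pi> x) = blinfun_apply f x"
      using annihilator_factor_quotient[OF \<pi> J f] by blast
    have "f = g o\<^sub>L Blinfun \<pi>" by (rule blinfun_eqI) (simp add: \<pi>_apply g)
    then have "blinfun_apply \<phi> f = blinfun_apply (canon q) g"
      unfolding q \<psi>_apply \<psi>_def by simp
    then show ?thesis using g[of x] by (simp add: x)
  qed
  then have "\<phi> - canon x \<in> biannihilator J"
    by (simp add: biannihilator_def blinfun.diff_left)
  then show ?thesis by blast
qed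

lemma infdist_canon_biannihilator:
  fixes J :: "'a::real_normed_vector set"
  assumes J: "subspace J"
  shows "infdist (canon y) (biannihilator J) = infdist y J"
proof (rule antisym)
  have "J \<noteq> {}" using subspace_0[OF J] by blast
  moreover have "infdist (canon y) (biannihilator J) \<le> dist y j" if "j \<in> J" for j
    using infdist_le[OF canon_in_biannihilator[OF that], of "canon y"] by simp
  ultimately show "infdist (canon y) (biannihilator J) \<le> infdist y J"
    by (simp add: infdist_notempty cINF_greatest)
next
  obtain f where f: "f \<in> annihilator J" "norm f \<le> 1" "blinfun_apply f y = infdist y J"
    using exists_annihilator_infdist[OF J] by blast
  have "infdist y J \<le> dist (canon y) \<phi>" if "\<phi> \<in> biannihilator J" for \<phi>
  proof -
    have "infdist y J = blinfun_apply (canon y - \<phi>) f"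
      using that f(1,3) by (simp add: biannihilator_def blinfun.diff_left)
    also have "\<dots> \<le> norm (canon y - \<phi>) * norm f"
      using norm_blinfun[of "canon y - \<phi>" f] by simp
    also have "\<dots> \<le> dist (canon y) \<phi>"
      using f(2) by (simp add: dist_norm mult_left_le)
    finally show ?thesis .
  qed
  moreover have "biannihilator J \<noteq> {}" using canon_in_biannihilator subspace_0[OF J] by blast
  ultimately show "infdist y J \<le> infdist (canon y) (biannihilator J)"
    by (simp add: infdist_notempty cINF_greatest)
qed

lemma infdist_canon_image:
  assumes "J \<noteq> {}"
  shows "infdist (canon y) (canon ` J) = infdist y J"
  using assms by (simp add: infdist_notempty image_image)

lemma closed_canon_image:
  fixes J :: "'a::real_normed_vector set"
  assumes "subspace J" "complete J"
  shows "closed (canon ` J)"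
  using complete_isometric_image[where e=1, OF _ assms(1) bounded_linear_canon _ assms(2)]
  by (simp add: complete_imp_closed)

section \<open>Transferring lifts of compact operators\<close>

lemma linear_isometry_inj:
  assumes "linear f" "\<And>x. norm (f x) = norm x"
  shows "inj f"
proof (rule injI)
  fix x y assume "f x = f y"
  then have "norm (f (x - y)) = 0" by (simp add: linear_diff[OF assms(1)])
  then show "x = y" using assms(2) by simp
qed

lemma onorm_cong_norm: "(\<And>x. norm (f x) = norm (g x)) \<Longrightarrow> onorm f = onorm g"
  by (simp add: onorm_def)

lemma compact_closure_image:
  fixes h :: "'a::metric_space \<Rightarrow> 'b::metric_space"
  assumes "compact (closure A)" "closure A \<subseteq> D" "continuous_on D h"
  shows "compact (closure (h ` A))"
proof -
  have c: "compact (h ` closure A)"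
    using assms by (meson compact_continuous_image continuous_on_subset)
  have "closure (h ` A) \<subseteq> h ` closure A"
    by (rule closure_minimal) (simp_all add: image_mono closure_subset compact_imp_closed[OF c])
  then have "closure (h ` A) = h ` closure A \<inter> closure (h ` A)" by blast
  then show ?thesis using c by (metis closed_closure compact_Int_closed)
qed

lemma compact_op_compose:
  assumes "compact_op S" "bounded_linear h"
  shows "compact_op (h \<circ> S)"
proof -
  have "bounded_linear S" "compact (closure (S ` cball 0 1))"
    using assms(1) unfolding compact_op_def by auto
  moreover from this have "compact (closure (h ` S ` cball 0 1))"
    by (intro compact_closure_image[OF _ subset_UNIV linear_continuous_on[OF assms(2)]])
  ultimately show ?thesis using assms(2)
    unfolding compact_op_def by (simp add: image_comp bounded_linear_compose o_def)
qed

lemma compact_op_factor_isometry: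
  fixes E :: "'a::real_normed_vector \<Rightarrow> 'b::real_normed_vector"
  assumes S: "compact_op S" "range S \<subseteq> E ` X"
    and E: "bounded_linear E" "\<And>x. norm (E x) = norm x"
    and X: "subspace X" "complete X"
  obtains S' where "compact_op S'" "range S' \<subseteq> X" "\<And>z. E (S' z) = S z" "onorm S' = onorm S"
proof
  define h where "h = inv_into X E"
  have E_h: "E (h b) = b" and h_in: "h b \<in> X" if "b \<in> E ` X" for b
    using that unfolding h_def by (auto simp: f_inv_into_f inv_into_into)
  have inj: "inj E" using E by (simp add: linear_isometry_inj bounded_linear.linear)
  have E_eq: "E x = E y \<Longrightarrow> x = y" for x y using inj by (simp add: inj_eq)
  have lin_S: "linear S" using S(1) unfolding compact_op_def by (simp add: bounded_linear.linear)
  have lin_E: "linear E" using E(1) by (simp add: bounded_linear.linear)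
  show E_hS: "E ((h \<circ> S) z) = S z" for z using E_h S(2) by (simp add: image_subset_iff)
  show "range (h \<circ> S) \<subseteq> X" using h_in S(2) by (simp add: image_subset_iff)
  have norm_hS: "norm ((h \<circ> S) z) = norm (S z)" for z by (metis E(2) E_hS)
  then show "onorm (h \<circ> S) = onorm S" by (rule onorm_cong_norm)
  have "bounded_linear (h \<circ> S)"
  proof (rule bounded_linear_intro[where K="onorm S"])
    show "(h \<circ> S) (a + b) = (h \<circ> S) a + (h \<circ> S) b" for a b
      by (rule E_eq) (simp only: E_hS linear_add[OF lin_E] linear_add[OF lin_S])
    show "(h \<circ> S) (r *\<^sub>R a) = r *\<^sub>R (h \<circ> S) a" for r a
      by (rule E_eq) (simp only: E_hS linear_scale[OF lin_E] linear_scale[OF lin_S])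
    show "norm ((h \<circ> S) a) \<le> norm a * onorm S" for a
      using S(1) unfolding norm_hS compact_op_def by (simp add: onorm mult.commute)
  qed
  moreover have "compact (closure (h ` S ` cball 0 1))"
  proof (rule compact_closure_image)
    show "compact (closure (S ` cball 0 1))" using S(1) unfolding compact_op_def by simp
    have "closed (E ` X)"
      using complete_isometric_image[where e=1, OF _ X(1) E(1) _ X(2)] E(2)
      by (simp add: complete_imp_closed)
    then show "closure (S ` cball 0 1) \<subseteq> E ` X"
      using S(2) by (simp add: closure_minimal image_subset_iff)
    have "dist (h u) (h v) = dist u v" if "u \<in> E ` X" "v \<in> E ` X" for u v
    proof -
      have "dist u v = norm (E (h u - h v))"
        using E_h[OF that(1)] E_h[OF that(2)] by (simp add: dist_norm linear_diff[OF lin_E])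
      then show ?thesis by (simp add: E(2) dist_norm)
    qed
    then show "continuous_on (E ` X) h"
      unfolding continuous_on_iff by (intro ballI allI impI exI[of _ "_"]) auto
  qed
  ultimately show "compact_op (h \<circ> S)" unfolding compact_op_def by (simp add: image_comp)
qed

lemma cqlp_extend_along_isometry:
  fixes E :: "'a::real_normed_vector \<Rightarrow> 'b::real_normed_vector"
    and \<pi> :: "'a \<Rightarrow> 'p::real_normed_vector" and \<rho> :: "'b \<Rightarrow> 'r::real_normed_vector"
  assumes lift: "cqlp TYPE('z::banach) \<pi> X J"
    and E: "bounded_linear E" "\<And>x. norm (E x) = norm x" "E ` X \<subseteq> X'"
    and \<iota>: "bounded_linear \<iota>" "\<And>p. norm (\<iota> p) = norm p" "surj \<iota>"
      "\<And>x. x \<in> X \<Longrightarrow> \<iota> (\<pi> x) = \<rho> (E x)"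
  shows "cqlp TYPE('z) \<rho> X' K"
  unfolding cqlp_def
proof (intro allI impI)
  fix T :: "'z \<Rightarrow> 'r" assume T: "compact_op T"
  define \<kappa> where "\<kappa> = inv \<iota>"
  have \<iota>_\<kappa>: "\<iota> (\<kappa> r) = r" for r unfolding \<kappa>_def using \<iota>(3) by (simp add: surj_f_inv_f)
  have inj: "inj \<iota>" using \<iota>(1,2) by (simp add: linear_isometry_inj bounded_linear.linear)
  have lin_\<iota>: "linear \<iota>" using \<iota>(1) by (simp add: bounded_linear.linear)
  have norm_\<kappa>: "norm (\<kappa> r) = norm r" for r by (metis \<iota>(2) \<iota>_\<kappa>)
  have "bounded_linear \<kappa>"
  proof (rule bounded_linear_intro[where K=1])
    show "\<kappa> (r + s) = \<kappa> r + \<kappa> s" for r s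
      using inj by (rule injD) (simp add: \<iota>_\<kappa> linear_add[OF lin_\<iota>])
    show "\<kappa> (c *\<^sub>R r) = c *\<^sub>R \<kappa> r" for c r
      using inj by (rule injD) (simp add: \<iota>_\<kappa> linear_scale[OF lin_\<iota>])
  qed (simp add: norm_\<kappa>)
  then have "compact_op (\<kappa> \<circ> T)" by (rule compact_op_compose[OF T])
  then obtain S where S: "compact_op S" "range S \<subseteq> X" "\<And>z. \<pi> (S z) = \<kappa> (T z)"
    "onorm S = onorm (\<kappa> \<circ> T)"
    using lift unfolding cqlp_def by auto
  have "compact_op (E \<circ> S)" by (rule compact_op_compose[OF S(1) E(1)])
  moreover have "range (E \<circ> S) \<subseteq> X'" using S(2) E(3) by auto
  moreover have "\<rho> ((E \<circ> S) z) = T z" for z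
    using \<iota>(4)[of "S z"] S(2,3) \<iota>_\<kappa> by (simp add: image_subset_iff)
  moreover have "onorm (E \<circ> S) = onorm T"
  proof -
    have "onorm (E \<circ> S) = onorm S" by (rule onorm_cong_norm) (simp add: E(2))
    also have "\<dots> = onorm T" unfolding S(4) by (rule onorm_cong_norm) (simp add: norm_\<kappa>)
    finally show ?thesis .
  qed
  ultimately show "\<exists>S :: 'z \<Rightarrow> 'b. compact_op S \<and> range S \<subseteq> X' \<and> (\<forall>z. \<rho> (S z) = T z)
      \<and> onorm S = onorm T"
    by blast
qed

lemma cqlp_restrict_along_isometry:
  fixes E :: "'a::real_normed_vector \<Rightarrow> 'b::real_normed_vector"
    and \<pi> :: "'a \<Rightarrow> 'p::real_normed_vector" and \<rho> :: "'b \<Rightarrow> 'r::real_normed_vector"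
  assumes lift: "cqlp TYPE('z::banach) \<rho> X' K"
    and \<rho>: "banach_quotient \<rho> X' K" "subspace X'" "subspace K" "closed K"
    and \<pi>: "\<pi> ` X = UNIV" and X: "subspace X" "complete X"
    and E: "bounded_linear E" "\<And>x. norm (E x) = norm x" "E ` X \<subseteq> X'" "K \<subseteq> E ` X"
    and \<iota>: "bounded_linear \<iota>" "\<And>p. norm (\<iota> p) = norm p"
      "\<And>x. x \<in> X \<Longrightarrow> \<iota> (\<pi> x) = \<rho> (E x)"
  shows "cqlp TYPE('z) \<pi> X J"
  unfolding cqlp_def
proof (intro allI impI)
  fix T :: "'z \<Rightarrow> 'p" assume T: "compact_op T"
  have lin_E: "linear E" using E(1) by (simp add: bounded_linear.linear)
  have "compact_op (\<iota> \<circ> T)" by (rule compact_op_compose[OF T \<iota>(1)])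
  then obtain S where S: "compact_op S" "range S \<subseteq> X'" "\<And>z. \<rho> (S z) = \<iota> (T z)"
    "onorm S = onorm (\<iota> \<circ> T)"
    using lift unfolding cqlp_def by auto
  \<comment> \<open>S z and a lift of T z have the same image under \<rho>, so they differ by an element of K.\<close>
  have "S z \<in> E ` X" for z
  proof -
    obtain x where x: "x \<in> X" "\<pi> x = T z" using \<pi> by (metis UNIV_I imageE)
    have "S z \<in> X'" "E x \<in> X'" using S(2) E(3) x(1) by auto
    moreover have "\<rho> (S z) = \<rho> (E x)" using S(3) \<iota>(3)[OF x(1)] x(2) by simp
    ultimately have "S z - E x \<in> K" using banach_quotient_eq_iff[OF \<rho>] by blast
    then obtain x' where x': "x' \<in> X" "S z - E x = E x'" using E(4) by blast
    have "S z = E x + (S z - E x)" by simp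
    also have "\<dots> = E (x + x')" using x'(2) by (simp add: linear_add[OF lin_E])
    finally show ?thesis using subspace_add[OF X(1) x(1) x'(1)] by blast
  qed
  then obtain S' where S': "compact_op S'" "range S' \<subseteq> X" "\<And>z. E (S' z) = S z"
    "onorm S' = onorm S"
    using compact_op_factor_isometry[OF S(1) _ E(1,2) X] by blast
  have inj_\<iota>: "inj \<iota>" using \<iota>(1,2) by (simp add: linear_isometry_inj bounded_linear.linear)
  have "\<iota> (\<pi> (S' z)) = \<iota> (T z)" for z
    using \<iota>(3) S'(2,3) S(3) by (simp add: image_subset_iff)
  then have "\<pi> (S' z) = T z" for z by (rule injD[OF inj_\<iota>])
  moreover have "onorm S' = onorm T"
    unfolding S'(4) S(4) by (rule onorm_cong_norm) (simp add: \<iota>(2))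
  ultimately show "\<exists>S :: 'z \<Rightarrow> 'a. compact_op S \<and> range S \<subseteq> X \<and> (\<forall>z. \<pi> (S z) = T z)
      \<and> onorm S = onorm T"
    using S' by blast
qed

section \<open>The three permanence properties\<close>

lemma cqlp_closed_subspace:
  fixes J Y :: "'a::banach set"
    and \<pi> :: "'a \<Rightarrow> 'q::real_normed_vector" and \<rho> :: "'a \<Rightarrow> 'r::real_normed_vector"
  assumes J: "subspace J" "closed J" and Y: "subspace Y" "closed Y" "J \<subseteq> Y"
    and \<pi>: "banach_quotient \<pi> UNIV J" and \<rho>: "banach_quotient \<rho> Y J"
    and lift: "cqlp TYPE('z::banach) \<pi> UNIV J"
  shows "cqlp TYPE('z) \<rho> Y J"
proof -
  obtain \<iota> where \<iota>: "bounded_linear \<iota>" "\<And>p. norm (\<iota> p) = norm p"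
    "\<And>y. y \<in> Y \<Longrightarrow> \<iota> (\<rho> y) = \<pi> (id y)"
    using quotient_isometry[OF \<rho> Y(1) \<pi> linear_id] by auto
  show ?thesis
    using Y \<rho> \<iota> unfolding banach_quotient_def
    by (intro cqlp_restrict_along_isometry[OF lift \<pi> subspace_UNIV J, where E=id])
      (auto simp: complete_eq_closed id_def)
qed

lemma cqlp_bidual:
  fixes J :: "'a::real_normed_vector set" and \<pi> :: "'a \<Rightarrow> 'q::real_normed_vector"
    and \<rho> :: "(('a \<Rightarrow>\<^sub>L real) \<Rightarrow>\<^sub>L real) \<Rightarrow> 'r::real_normed_vector"
  assumes J: "subspace J" and \<pi>: "banach_quotient \<pi> UNIV J"
    and refl: "reflexive_space TYPE('q)"
    and \<rho>: "banach_quotient \<rho> UNIV (biannihilator J)"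
    and lift: "cqlp TYPE('z::banach) \<pi> UNIV J"
  shows "cqlp TYPE('z) \<rho> UNIV (biannihilator J)"
proof -
  obtain \<iota> where \<iota>: "bounded_linear \<iota>" "\<And>p. norm (\<iota> p) = norm p"
    "\<And>x. \<iota> (\<pi> x) = \<rho> (canon x)"
    using quotient_isometry[OF \<pi> subspace_UNIV \<rho> bounded_linear.linear[OF bounded_linear_canon]]
      infdist_canon_biannihilator[OF J] by auto
  have "\<rho> \<phi> \<in> range \<iota>" for \<phi>
  proof -
    obtain x where x: "\<phi> - canon x \<in> biannihilator J"
      using bidual_eq_canon_plus_biannihilator[OF \<pi> J refl] by blast
    have "norm (\<rho> \<phi> - \<rho> (canon x)) = 0"
      using norm_banach_quotient_diff[OF \<rho> subspace_UNIV] x by simp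
    then show ?thesis using \<iota>(3)[of x] by (metis eq_iff_diff_eq_0 norm_eq_zero rangeI)
  qed
  then have "surj \<iota>" using \<rho> unfolding banach_quotient_def by (metis image_subsetI top.extremum_uniqueI)
  then show ?thesis
    using \<iota> by (intro cqlp_extend_along_isometry[OF lift bounded_linear_canon]) auto
qed

lemma cqlp_of_bidual:
  fixes J :: "'a::banach set" and \<pi> :: "'a \<Rightarrow> 'q::real_normed_vector"
    and \<rho> :: "(('a \<Rightarrow>\<^sub>L real) \<Rightarrow>\<^sub>L real) \<Rightarrow> 'r::real_normed_vector"
  assumes J: "subspace J" "closed J" and \<pi>: "banach_quotient \<pi> UNIV J"
    and \<rho>: "banach_quotient \<rho> UNIV (canon ` J)"
    and lift: "cqlp TYPE('z::banach) \<rho> UNIV (canon ` J)"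
  shows "cqlp TYPE('z) \<pi> UNIV J"
proof -
  have J_ne: "J \<noteq> {}" using subspace_0[OF J(1)] by blast
  obtain \<iota> where \<iota>: "bounded_linear \<iota>" "\<And>p. norm (\<iota> p) = norm p"
    "\<And>x. \<iota> (\<pi> x) = \<rho> (canon x)"
    using quotient_isometry[OF \<pi> subspace_UNIV \<rho> bounded_linear.linear[OF bounded_linear_canon]]
      infdist_canon_image[OF J_ne] by auto
  have "subspace (canon ` J)"
    by (rule linear_subspace_image[OF bounded_linear.linear[OF bounded_linear_canon] J(1)])
  moreover have "closed (canon ` J)"
    using J by (intro closed_canon_image) (simp_all add: complete_eq_closed)
  ultimately show ?thesis
    using \<pi> \<iota> unfolding banach_quotient_def
    by (intro cqlp_restrict_along_isometry[OF lift \<rho> subspace_UNIV _ _ _ subspace_UNIV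
          complete_UNIV bounded_linear_canon]) auto
qed

theorem proposition4:
  shows
  "(\<forall>(J :: 'a::banach set) (Y :: 'a set) (\<pi> :: 'a \<Rightarrow> 'q::banach) (\<rho> :: 'a \<Rightarrow> 'r::banach).
      subspace J \<and> closed J \<and> subspace Y \<and> closed Y \<and> J \<subseteq> Y \<and>
      banach_quotient \<pi> UNIV J \<and> banach_quotient \<rho> Y J \<and> cqlp TYPE('z::banach) \<pi> UNIV J
      \<longrightarrow> cqlp TYPE('z) \<rho> Y J)
 \<and> (\<forall>(J :: 'b::banach set) (\<pi> :: 'b \<Rightarrow> 's::banach)
       (\<rho> :: (('b \<Rightarrow>\<^sub>L real) \<Rightarrow>\<^sub>L real) \<Rightarrow> 't::banach).
      subspace J \<and> closed J \<and> banach_quotient \<pi> UNIV J \<and> reflexive_space TYPE('s) \<and>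
      banach_quotient \<rho> UNIV (biannihilator J) \<and> cqlp TYPE('z) \<pi> UNIV J
      \<longrightarrow> cqlp TYPE('z) \<rho> UNIV (biannihilator J))
 \<and> (\<forall>(J :: 'c::banach set) (e :: 'j::banach \<Rightarrow> 'c) (\<pi> :: 'c \<Rightarrow> 'u::banach)
       (\<rho> :: (('c \<Rightarrow>\<^sub>L real) \<Rightarrow>\<^sub>L real) \<Rightarrow> 'v::banach).
      subspace J \<and> closed J \<and>
      bounded_linear e \<and> (\<forall>x. norm (e x) = norm x) \<and> range e = J \<and> reflexive_space TYPE('j) \<and>
      banach_quotient \<pi> UNIV J \<and>
      banach_quotient \<rho> UNIV (canon ` J) \<and> cqlp TYPE('z) \<rho> UNIV (canon ` J)
      \<longrightarrow> cqlp TYPE('z) \<pi> UNIV J)"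
  by (intro conjI allI impI; elim conjE;
      (rule cqlp_closed_subspace cqlp_bidual cqlp_of_bidual; assumption))

end
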